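(* Let $m$ be a positive integer. There do not exist complex numbers $c_0,c_1,\dots,c_{2m-1}$ such that, identically as meromorphic functions of $s\in\mathbb{C}$, $$\zeta(-2m,s+2m)+c_{2m-1}\zeta(-2m+1,s+2m-1)+c_{2m-2}\zeta(-2m+2,s+2m-2)+\cdots+c_2\zeta(-2,s+2)+c_1\zeta(-1,s+1)+c_0\,\zeta(0,s)/2\equiv0.$$
   Context: For an integer $c\ge 0$, $\zeta(-c,s+c)$ denotes the Euler–Zagier double zeta function $\zeta(s_1,s_2)=\sum_{1\le n_1<n_2} n_1^{-s_1}n_2^{-s_2}$ evaluated at $(s_1,s_2)=(-c,s+c)$; i.e. it is the meromorphic continuation to all $s\in\mathbb{C}$ of the series $\sum_{m,n\ge1} m^{c}(m+n)^{-s-c}$, which converges absolutely for $\Re(s)>2$. *)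

theory Defs
  imports "HOL-Complex_Analysis.Complex_Analysis"
begin

text \<open>The Dirichlet series  sum over m,n >= 1 of m^c (m+n)^(-s-c), i.e. the
  Euler--Zagier double zeta value zeta(-c, s+c) in its region of absolute
  convergence Re s > 2.\<close>
definition dz_series :: "nat \<Rightarrow> complex \<Rightarrow> complex" where
  "dz_series c s =
     (\<Sum>\<^sub>\<infinity>(m,n)\<in>{1::nat..} \<times> {1::nat..}.
        of_nat m ^ c * of_nat (m + n) powr (- (s + of_nat c)))"

text \<open>f is a (the) meromorphic continuation to all of C of s |-> zeta(-c, s+c).
  (Meromorphic functions are only determined up to their values at isolated points.)\<close>
definition is_dz_continuation :: "nat \<Rightarrow> (complex \<Rightarrow> complex) \<Rightarrow> bool" where
  "is_dz_continuation c f \<longleftrightarrow>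
     f meromorphic_on UNIV \<and> (\<forall>s. Re s > 2 \<longrightarrow> f s = dz_series c s)"

end

theory Submission
  imports Defs
begin

(* For Re s > 2, zeta(-c, s + c) is the ordinary Dirichlet series with coefficients
   a_c(N) = N^-c (1^c + ... + (N-1)^c). Dirichlet coefficients are unique, so a vanishing
   combination of these functions makes the same combination of the a_c(N) vanish for
   every N. Multiplied by N^2m, this becomes a polynomial identity in N; by Faulhaber's
   formula its coefficient of N is the Bernoulli number B_2m, which is nonzero because
   B_2m = 0 would force the integral of B_m(x)^2 over [0, 1] to vanish. *)

lemma smult_sum_right: "smult c (\<Sum>x\<in>A. f x) = (\<Sum>x\<in>A. smult c (f x))"
  by (induction A rule: infinite_finite_induct) (simp_all add: smult_add_right)

lemma pderiv_sum: "pderiv (\<Sum>x\<in>A. f x) = (\<Sum>x\<in>A. pderiv (f x))"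
  using higher_pderiv_sum [of 1] by simp

lemma poly_map_poly_of_real: "poly (map_poly of_real p) (of_real x) = of_real (poly p x)"
  by (induction p) (simp_all add: map_poly_pCons)

lemma poly_eq_0_if_nat_roots:
  fixes p :: "'a :: {idom, ring_char_0} poly"
  assumes "\<And>n. n \<ge> 1 \<Longrightarrow> poly p (of_nat n) = 0"
  shows "p = 0"
proof (rule ccontr)
  assume "p \<noteq> 0"
  have "of_nat ` {1..} \<subseteq> {x. poly p x = 0}"
    using assms by auto
  then have "finite (of_nat ` {1..} :: 'a set)"
    using poly_roots_finite [OF \<open>p \<noteq> 0\<close>] by (rule finite_subset)
  then have "finite {1::nat..}"
    by (rule finite_imageD) (simp add: inj_on_def)
  then show False
    using infinite_Ici [of "1::nat"] by contradiction
qed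

lemma has_integral_poly_pderiv:
  fixes p :: "real poly"
  assumes "a \<le> b"
  shows "(poly (pderiv p) has_integral (poly p b - poly p a)) {a..b}"
proof (rule fundamental_theorem_of_calculus [OF assms])
  fix x :: real
  show "(poly p has_vector_derivative poly (pderiv p) x) (at x within {a..b})"
    using poly_DERIV [of p x]
    by (simp add: has_real_derivative_iff_has_vector_derivative has_vector_derivative_at_within)
qed

lemma sum_atMost_split_first_last:
  fixes f :: "nat \<Rightarrow> 'a :: comm_monoid_add"
  assumes "M \<ge> 1"
  shows "(\<Sum>c\<le>M. f c) = f M + (\<Sum>c = 1..M - 1. f c) + f 0"
proof -
  have "{..M} = insert M (insert 0 {1..M - 1})"
    using assms by auto
  then show ?thesis
    using assms by (simp add: ac_simps)
qed

section \<open>Bernoulli numbers and polynomials\<close>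

fun bernoulli :: "nat \<Rightarrow> real" where
  "bernoulli n = (if n = 0 then 1
     else - (\<Sum>k<n. of_nat (Suc n choose k) * bernoulli k) / of_nat (Suc n))"

declare bernoulli.simps [simp del]

lemma bernoulli_0 [simp]: "bernoulli 0 = 1"
  by (simp add: bernoulli.simps)

lemma bernoulli_1 [simp]: "bernoulli 1 = -1/2"
  by (simp add: bernoulli.simps)

lemma sum_binomial_bernoulli:
  assumes "n \<ge> 1"
  shows "(\<Sum>k\<le>n. of_nat (Suc n choose k) * bernoulli k) = 0"
proof -
  have "of_nat (Suc n) * bernoulli n = - (\<Sum>k<n. of_nat (Suc n choose k) * bernoulli k)"
    using assms by (subst bernoulli.simps) (simp add: field_simps)
  then show ?thesis
    by (simp add: lessThan_Suc_atMost [symmetric] algebra_simps)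
qed

definition bernpoly :: "nat \<Rightarrow> real poly" where
  "bernpoly n = (\<Sum>k\<le>n. monom (of_nat (n choose k) * bernoulli k) (n - k))"

lemma poly_bernpoly:
  "poly (bernpoly n) x = (\<Sum>k\<le>n. of_nat (n choose k) * bernoulli k * x ^ (n - k))"
  by (simp add: bernpoly_def poly_sum poly_monom)

lemma bernpoly_0 [simp]: "bernpoly 0 = 1"
  by (simp add: bernpoly_def)

lemma poly_bernpoly_0 [simp]: "poly (bernpoly n) 0 = bernoulli n"
proof -
  have "poly (bernpoly n) 0 = (\<Sum>k\<le>n. if k = n then bernoulli n else 0)"
    unfolding poly_bernpoly by (intro sum.cong) auto
  then show ?thesis by simp
qed

lemma poly_bernpoly_1:
  assumes "n \<ge> 2"
  shows "poly (bernpoly n) 1 = bernoulli n"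
proof -
  obtain p where p: "n = Suc p" "p \<ge> 1" using assms by (cases n) auto
  have "poly (bernpoly n) 1 = (\<Sum>k\<le>p. of_nat (n choose k) * bernoulli k) + bernoulli n"
    unfolding poly_bernpoly p(1) by (simp add: sum.atMost_Suc)
  then show ?thesis using sum_binomial_bernoulli [OF p(2)] p(1) by simp
qed

lemma coeff_bernpoly_self: "coeff (bernpoly n) n = 1"
proof -
  have "coeff (bernpoly n) n = (\<Sum>k\<le>n. if k = 0 then 1 else 0)"
    unfolding bernpoly_def coeff_sum coeff_monom by (intro sum.cong) auto
  then show ?thesis by simp
qed

lemma bernpoly_nonzero: "bernpoly n \<noteq> 0"
  using coeff_bernpoly_self [of n] by auto

lemma coeff_bernpoly_Suc_1: "coeff (bernpoly (Suc n)) 1 = of_nat (Suc n) * bernoulli n"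
proof -
  have "coeff (bernpoly (Suc n)) 1 =
        (\<Sum>k\<le>Suc n. if k = n then of_nat (Suc n) * bernoulli n else 0)"
    unfolding bernpoly_def coeff_sum coeff_monom by (intro sum.cong) auto
  then show ?thesis by simp
qed

lemma pderiv_bernpoly: "pderiv (bernpoly (Suc n)) = smult (of_nat (Suc n)) (bernpoly n)"
proof -
  have "pderiv (bernpoly (Suc n)) =
        (\<Sum>k\<le>n. monom (of_nat (Suc n - k) * (of_nat (Suc n choose k) * bernoulli k)) (n - k))"
    unfolding bernpoly_def pderiv_sum pderiv_monom by (simp add: sum.atMost_Suc)
  also have "\<dots> = (\<Sum>k\<le>n. smult (of_nat (Suc n)) (monom (of_nat (n choose k) * bernoulli k) (n - k)))"
  proof (intro sum.cong refl)
    fix k assume "k \<in> {..n}"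
    have "real (Suc n - k) * real (Suc n choose k) = real (Suc n) * real (n choose k)"
      by (metis binomial_absorb_comp diff_Suc_1 of_nat_mult)
    then show "monom (of_nat (Suc n - k) * (of_nat (Suc n choose k) * bernoulli k)) (n - k) =
               smult (of_nat (Suc n)) (monom (of_nat (n choose k) * bernoulli k) (n - k))"
      by (simp add: smult_monom mult.assoc [symmetric])
  qed
  also have "\<dots> = smult (of_nat (Suc n)) (bernpoly n)"
    by (simp add: bernpoly_def smult_sum_right)
  finally show ?thesis .
qed

lemma bernpoly_diff:
  "poly (bernpoly (Suc n)) (x + 1) - poly (bernpoly (Suc n)) x = of_nat (Suc n) * x ^ n"
proof (induction n arbitrary: x)
  case 0
  show ?case by (simp add: poly_bernpoly)
next
  case (Suc n)
  define B where "B = bernpoly (Suc (Suc n))"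
  define D where "D x = poly B (x + 1) - poly B x - of_nat (Suc (Suc n)) * x ^ Suc n" for x
  have "DERIV D x :> 0" for x
  proof -
    have "poly (pderiv B) (x + 1) - poly (pderiv B) x - of_nat (Suc (Suc n)) * (of_nat (Suc n) * x ^ n)
          = of_nat (Suc (Suc n)) * (poly (bernpoly (Suc n)) (x + 1) - poly (bernpoly (Suc n)) x
                                    - of_nat (Suc n) * x ^ n)"
      by (simp only: B_def pderiv_bernpoly poly_smult) (simp add: algebra_simps)
    also have "\<dots> = 0"
      using Suc.IH [of x] by simp
    finally have D': "poly (pderiv B) (x + 1) - poly (pderiv B) x
                      - of_nat (Suc (Suc n)) * (of_nat (Suc n) * x ^ n) = 0" .
    show ?thesis
      unfolding D_def D' [symmetric]
      by (rule derivative_eq_intros DERIV_chain2 [OF poly_DERIV] refl | simp)+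
  qed
  then have "D x = D 0"
    by (intro DERIV_isconst_all) auto
  also have "D 0 = 0"
    using poly_bernpoly_1 [of "Suc (Suc n)"] by (simp add: D_def B_def)
  finally show ?case by (simp add: D_def B_def)
qed

lemma sum_of_powers_bernpoly:
  "(\<Sum>j<n. real j ^ k) = (poly (bernpoly (Suc k)) (real n) - bernoulli (Suc k)) / of_nat (Suc k)"
proof (induction n)
  case (Suc n)
  have "poly (bernpoly (Suc k)) (real (Suc n)) =
        poly (bernpoly (Suc k)) (real n) + of_nat (Suc k) * real n ^ k"
    using bernpoly_diff [of k "real n"] by (simp add: add.commute)
  with Suc.IH show ?case by (simp add: field_simps del: of_nat_Suc)
qed simp

lemma has_integral_bernpoly: "(poly (bernpoly (Suc n)) has_integral 0) {0..1}"
proof -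
  have "(poly (pderiv (bernpoly (Suc (Suc n)))) has_integral 0) {0..1}"
    using has_integral_poly_pderiv [of 0 1 "bernpoly (Suc (Suc n))"]
    by (simp add: poly_bernpoly_1)
  from has_integral_divide [OF this, of "of_nat (Suc (Suc n))"] show ?thesis
    by (simp only: pderiv_bernpoly poly_smult) (simp del: of_nat_Suc)
qed

(* Integration by parts: (B_(a+1) B_(b+1))' = (a+1) B_a B_(b+1) + (b+1) B_(a+1) B_b, and
   B_(a+1) B_(b+1) takes equal values at 0 and 1 (for a = 0 because B_(b+1) = 0), so an
   index can be moved from one factor to the other until one factor is B_0 = 1. *)
lemma has_integral_bernpoly_mult:
  assumes "a \<ge> 1" "b \<ge> 1" "bernoulli (a + b) = 0"
  shows "(poly (bernpoly a * bernpoly b) has_integral 0) {0..1}"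
  using assms
proof (induction a arbitrary: b)
  case (Suc a)
  define Q where "Q = bernpoly (Suc a) * bernpoly (Suc b)"
  have "poly Q 1 = poly Q 0"
  proof (cases "a = 0")
    case True
    then show ?thesis
      using Suc.prems poly_bernpoly_1 [of "Suc b"] by (simp add: Q_def)
  next
    case False
    then show ?thesis
      using Suc.prems poly_bernpoly_1 [of "Suc a"] poly_bernpoly_1 [of "Suc b"] by (simp add: Q_def)
  qed
  then have Q': "(poly (pderiv Q) has_integral 0) {0..1}"
    using has_integral_poly_pderiv [of 0 1 Q] by simp
  have shifted: "(poly (bernpoly a * bernpoly (Suc b)) has_integral 0) {0..1}"
  proof (cases "a = 0")
    case True
    then show ?thesis using has_integral_bernpoly [of b] by simp
  next
    case False
    then show ?thesis using Suc.prems by (intro Suc.IH) auto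
  qed
  have "poly (bernpoly (Suc a) * bernpoly b) =
        (\<lambda>x. (poly (pderiv Q) x - of_nat (Suc a) * poly (bernpoly a * bernpoly (Suc b)) x) / of_nat (Suc b))"
    by (simp add: fun_eq_iff Q_def pderiv_mult pderiv_bernpoly field_simps del: of_nat_Suc)
  moreover have "((\<lambda>x. (poly (pderiv Q) x - of_nat (Suc a) * poly (bernpoly a * bernpoly (Suc b)) x)
                   / of_nat (Suc b)) has_integral 0) {0..1}"
    using has_integral_divide [OF has_integral_diff [OF Q' has_integral_mult_right [OF shifted]]]
    by simp
  ultimately show ?case by (simp only:)
qed simp

theorem bernoulli_even_nonzero:
  assumes "m \<ge> 1"
  shows "bernoulli (2 * m) \<noteq> 0"
proof
  assume "bernoulli (2 * m) = 0"
  then have "integral {0..1} (poly (bernpoly m * bernpoly m)) = 0"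
    using has_integral_bernpoly_mult [of m m] assms by (simp add: mult_2 integral_unique)
  moreover have "continuous_on {0..1} (poly (bernpoly m * bernpoly m))"
    by (intro continuous_on_poly continuous_on_id)
  ultimately have "\<forall>x\<in>{0..1}. poly (bernpoly m) x = 0"
    by (subst (asm) integral_eq_0_iff) auto
  then have "{0..1::real} \<subseteq> {x. poly (bernpoly m) x = 0}"
    by auto
  then have "finite {0..1::real}"
    using poly_roots_finite [OF bernpoly_nonzero] by (rule finite_subset)
  then show False
    by (simp add: infinite_Icc)
qed

definition power_sum_poly :: "nat \<Rightarrow> real poly" where
  "power_sum_poly k = smult (1 / of_nat (Suc k)) (bernpoly (Suc k) - [:bernoulli (Suc k):])"

lemma poly_power_sum_poly: "poly (power_sum_poly k) (real n) = (\<Sum>j<n. real j ^ k)"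
  by (simp add: power_sum_poly_def sum_of_powers_bernpoly divide_simps)

lemma poly_power_sum_poly_0 [simp]: "poly (power_sum_poly k) 0 = 0"
  by (simp add: power_sum_poly_def)

lemma coeff_power_sum_poly_1: "coeff (power_sum_poly k) 1 = bernoulli k"
  using coeff_bernpoly_Suc_1 [of k] by (simp add: power_sum_poly_def del: of_nat_Suc)

section \<open>Uniqueness of Dirichlet series coefficients\<close>

lemma powr_le_powr_mult_power:
  fixes x q s t :: real
  assumes "0 < x" "x \<le> q" "q \<le> 1" "s + real k \<le> t"
  shows "x powr t \<le> x powr s * q ^ k"
proof -
  have "x powr t = x powr s * x powr (t - s)"
    by (simp flip: powr_add)
  also have "x powr (t - s) \<le> q powr (t - s)"
    using assms by (intro powr_mono2) auto
  also have "q powr (t - s) \<le> q powr real k"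
    using assms by (intro powr_mono') auto
  also have "q powr real k = q ^ k"
    using assms by (simp add: powr_realpow)
  finally show ?thesis
    by (simp add: mult_left_mono)
qed

(* Once a_1, ..., a_(N-1) vanish, a zero of the series at sigma gives
   a_N = - sum_(n > N) a_n (N/n)^sigma, which is O((N/(N+1))^sigma). *)
theorem dirichlet_series_coeff_eq_0:
  fixes a :: "nat \<Rightarrow> 'a :: {banach, real_normed_field}"
  assumes bound: "\<And>n. n \<ge> 1 \<Longrightarrow> norm (a n) \<le> C * real n powr \<alpha>"
    and zero: "\<exists>\<^sub>F \<sigma> in at_top. (\<lambda>n. a n * of_real (real n powr -\<sigma>)) sums 0"
    and "n \<ge> 1"
  shows "a n = 0"
  using \<open>n \<ge> 1\<close>
proof (induction n rule: less_induct)
  case (less N)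
  define \<sigma>\<^sub>0 where "\<sigma>\<^sub>0 = \<alpha> + 2"
  define q where "q = real N / real (N + 1)"
  define g where "g i = C * real N powr \<sigma>\<^sub>0 * real (i + Suc N) powr -2" for i
  have q: "0 < q" "q < 1"
    using less.prems by (auto simp: q_def)
  have "summable (\<lambda>i. real (i + Suc N) powr -2)"
    using summable_iff_shift [of "\<lambda>n. real n powr -2" "Suc N"] summable_real_powr_iff by auto
  then have g: "summable g"
    unfolding g_def by (rule summable_mult)
  have "norm (a N) \<le> q ^ k * suminf g" for k
  proof -
    obtain \<sigma> where \<sigma>: "\<sigma> \<ge> \<sigma>\<^sub>0 + real k" and sums: "(\<lambda>n. a n * of_real (real n powr -\<sigma>)) sums 0"
      using zero by (auto simp: frequently_def eventually_at_top_linorder)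
    define f where "f n = a n * of_real (real n powr -\<sigma>) * of_real (real N powr \<sigma>)" for n
    have "f sums 0"
      unfolding f_def using sums_mult2 [OF sums, of "of_real (real N powr \<sigma>)"] by simp
    moreover have "(\<Sum>n<Suc N. f n) = a N"
    proof -
      have "f n = 0" if "n < N" for n
        using that less.IH [of n] by (cases "n = 0") (auto simp: f_def)
      then have "(\<Sum>n<Suc N. f n) = f N"
        by simp
      also have "f N = a N"
        using less.prems by (simp add: f_def mult.assoc flip: of_real_mult powr_add)
      finally show ?thesis .
    qed
    ultimately have tail: "(\<lambda>i. f (i + Suc N)) sums - a N"
      using sums_split_initial_segment [of f 0 "Suc N"] by simp
    have "norm (f (i + Suc N)) \<le> q ^ k * g i" for i
    proof -
      define m where "m = i + Suc N"
      have m: "real N < real m" "0 < real N"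
        using less.prems by (auto simp: m_def)
      have a_m: "norm (a m) \<le> C * real m powr \<alpha>"
        by (rule bound) (simp add: m_def)
      have "norm (f m) = norm (a m) * (real N / real m) powr \<sigma>"
        using m by (simp add: f_def norm_mult norm_divide powr_divide powr_minus divide_simps)
      also have "\<dots> \<le> C * real m powr \<alpha> * ((real N / real m) powr \<sigma>\<^sub>0 * q ^ k)"
        using m q a_m order_trans [OF norm_ge_zero a_m] \<sigma>
        by (intro mult_mono powr_le_powr_mult_power) (auto simp: q_def m_def divide_simps)
      also have "\<dots> = q ^ k * g i"
        using m by (simp add: g_def m_def \<sigma>\<^sub>0_def powr_divide powr_diff [symmetric]
                               powr_add [symmetric] field_simps)
      finally show ?thesis
        by (simp add: m_def)
    qed
    then have "norm (suminf (\<lambda>i. f (i + Suc N))) \<le> (\<Sum>i. q ^ k * g i)"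
      using g by (intro norm_suminf_le summable_mult) auto
    then show ?thesis
      using tail g by (simp add: sums_iff suminf_mult)
  qed
  moreover have "(\<lambda>k. q ^ k * suminf g) \<longlonglongrightarrow> 0"
    using q by (intro tendsto_mult_left_zero LIMSEQ_realpow_zero) auto
  ultimately have "norm (a N) \<le> 0"
    by (intro LIMSEQ_le_const) auto
  then show ?case
    by simp
qed

lemma eventually_at_imp_frequently_at_top:
  fixes P :: "'a :: real_normed_algebra_1 \<Rightarrow> bool"
  assumes "\<And>z. \<forall>\<^sub>F s in at z. P s"
  shows "\<exists>\<^sub>F \<sigma> in at_top. P (of_real \<sigma>)"
proof -
  have "\<exists>\<sigma>\<ge>x. P (of_real \<sigma>)" for x
  proof -
    obtain d where "d > 0" and d: "\<And>s. s \<noteq> of_real x \<Longrightarrow> dist s (of_real x) < d \<Longrightarrow> P s"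
      using assms [of "of_real x"] unfolding eventually_at by auto
    have "P (of_real (x + d / 2))"
      using \<open>d > 0\<close> by (intro d) (auto simp: dist_norm simp flip: of_real_diff)
    then show ?thesis
      using \<open>d > 0\<close> by (intro exI [of _ "x + d / 2"]) auto
  qed
  then show ?thesis
    by (auto simp: frequently_def eventually_at_top_linorder)
qed

section \<open>The double zeta function as a Dirichlet series\<close>

definition dz_coeff :: "nat \<Rightarrow> nat \<Rightarrow> real" where
  "dz_coeff c N = (\<Sum>j\<in>{1..<N}. real j ^ c) / real N ^ c"

lemma dz_coeff_nonneg: "dz_coeff c N \<ge> 0"
  unfolding dz_coeff_def by (intro divide_nonneg_nonneg sum_nonneg) auto

lemma dz_coeff_le: "dz_coeff c N \<le> real N"
proof (cases "N = 0")
  case False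
  have "(\<Sum>j\<in>{1..<N}. real j ^ c) \<le> (\<Sum>j\<in>{1..<N}. real N ^ c)"
    by (intro sum_mono power_mono) auto
  also have "\<dots> \<le> real N * real N ^ c"
    by (simp add: mult_right_mono)
  finally show ?thesis
    using False by (simp add: dz_coeff_def divide_simps)
qed (simp add: dz_coeff_def)

lemma dz_coeff_mult_powr:
  "dz_coeff c N * real N powr -\<sigma> = (\<Sum>j\<in>{1..<N}. real j ^ c * real N powr -(\<sigma> + real c))"
proof (cases "N = 0")
  case False
  then have "real N powr -(\<sigma> + real c) = real N powr -\<sigma> / real N ^ c"
    by (simp add: powr_diff powr_realpow)
  then show ?thesis
    unfolding dz_coeff_def sum_divide_distrib sum_distrib_right by (simp add: field_simps)
qed (simp add: dz_coeff_def)

lemma summable_dz_coeff: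
  assumes "\<sigma> > 2"
  shows "summable (\<lambda>N. dz_coeff c N * real N powr -\<sigma>)"
proof (rule summable_comparison_test)
  show "summable (\<lambda>N. real N powr (1 - \<sigma>))"
    using assms by (simp add: summable_real_powr_iff)
  show "\<exists>N\<^sub>0. \<forall>N\<ge>N\<^sub>0. norm (dz_coeff c N * real N powr -\<sigma>) \<le> real N powr (1 - \<sigma>)"
    using dz_coeff_nonneg dz_coeff_le
    by (auto intro!: mult_right_mono simp: powr_diff powr_minus divide_inverse)
qed

lemma has_sum_dz_series_real:
  assumes "\<sigma> > 2"
  shows "((\<lambda>(m, n). real m ^ c * real (m + n) powr -(\<sigma> + real c))
           has_sum (\<Sum>N. dz_coeff c N * real N powr -\<sigma>)) ({1..} \<times> {1..})"
proof -
  define g where "g = (\<lambda>(N, j). real j ^ c * real N powr -(\<sigma> + real c))"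
  define S where "S = (\<Sum>N. dz_coeff c N * real N powr -\<sigma>)"
  have rows: "((\<lambda>j. g (N, j)) has_sum (dz_coeff c N * real N powr -\<sigma>)) {1..<N}" for N
    by (intro has_sum_finiteI) (simp_all add: dz_coeff_mult_powr g_def)
  have "((\<lambda>N. dz_coeff c N * real N powr -\<sigma>) has_sum S) UNIV"
    unfolding S_def using summable_dz_coeff [OF assms]
    by (intro sums_nonneg_imp_has_sum summable_sums) (auto intro: mult_nonneg_nonneg dz_coeff_nonneg)
  moreover from this have "g summable_on Sigma UNIV (\<lambda>N. {1..<N})"
    by (intro summable_on_SigmaI [OF rows]) (auto simp: g_def summable_on_def)
  ultimately have "(g has_sum S) (Sigma UNIV (\<lambda>N. {1..<N}))"
    by (intro has_sum_SigmaI [OF rows])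
  also have "?this \<longleftrightarrow> ?thesis"
    unfolding S_def g_def
    by (rule has_sum_reindex_bij_witness [where j = "\<lambda>(N, j). (j, N - j)" and i = "\<lambda>(m, n). (m + n, m)"])
       auto
  finally show ?thesis .
qed

lemma dz_series_sums:
  assumes "\<sigma> > 2"
  shows "(\<lambda>N. of_real (dz_coeff c N * real N powr -\<sigma>)) sums dz_series c (of_real \<sigma>)"
proof -
  have "(\<lambda>(m, n). of_nat m ^ c * of_nat (m + n) powr -(complex_of_real \<sigma> + of_nat c)) =
        (\<lambda>p. complex_of_real ((\<lambda>(m, n). real m ^ c * real (m + n) powr -(\<sigma> + real c)) p))"
    by (auto simp: fun_eq_iff simp flip: powr_of_real)
  with has_sum_of_real [OF has_sum_dz_series_real [OF assms, of c]]
  have "dz_series c (of_real \<sigma>) = of_real (\<Sum>N. dz_coeff c N * real N powr -\<sigma>)"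
    unfolding dz_series_def by (intro infsumI) simp
  moreover have "(\<lambda>N. complex_of_real (dz_coeff c N * real N powr -\<sigma>))
                   sums of_real (\<Sum>N. dz_coeff c N * real N powr -\<sigma>)"
    using summable_dz_coeff [OF assms] by (intro sums_of_real summable_sums)
  ultimately show ?thesis
    by (simp only:)
qed

lemma dz_continuation_lincomb_sums:
  fixes w :: "nat \<Rightarrow> complex"
  assumes "\<And>c. c \<le> M \<Longrightarrow> is_dz_continuation c (Z c)"
  shows "\<forall>\<^sub>F \<sigma> in at_top. (\<lambda>N. (\<Sum>c\<le>M. w c * of_real (dz_coeff c N)) * of_real (real N powr -\<sigma>))
                           sums (\<Sum>c\<le>M. w c * Z c (of_real \<sigma>))"
  using eventually_gt_at_top [of 2]
proof eventually_elim
  case (elim \<sigma>)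
  have "(\<lambda>N. \<Sum>c\<le>M. w c * of_real (dz_coeff c N * real N powr -\<sigma>))
          sums (\<Sum>c\<le>M. w c * dz_series c (of_real \<sigma>))"
    using dz_series_sums [OF elim] by (intro sums_sum sums_mult)
  moreover have "dz_series c (of_real \<sigma>) = Z c (of_real \<sigma>)" if "c \<le> M" for c
    using assms [OF that] elim by (simp add: is_dz_continuation_def)
  ultimately show ?case
    by (simp add: sum_distrib_right mult.assoc)
qed

lemma norm_dz_coeff_lincomb_le:
  fixes w :: "nat \<Rightarrow> complex"
  shows "norm (\<Sum>c\<le>M. w c * of_real (dz_coeff c N)) \<le> (\<Sum>c\<le>M. norm (w c)) * real N"
  unfolding sum_distrib_right
  using dz_coeff_nonneg dz_coeff_le
  by (intro order.trans [OF norm_sum] sum_mono) (simp add: norm_mult mult_left_mono)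

lemma dz_coeff_lincomb_eq_0_if_vanishing:
  fixes w :: "nat \<Rightarrow> complex"
  assumes "\<And>c. c \<le> M \<Longrightarrow> is_dz_continuation c (Z c)"
    and "\<And>z. \<forall>\<^sub>F s in at z. (\<Sum>c\<le>M. w c * Z c s) = 0"
    and "N \<ge> 1"
  shows "(\<Sum>c\<le>M. w c * of_real (dz_coeff c N)) = 0"
proof (rule dirichlet_series_coeff_eq_0
    [where a = "\<lambda>N. \<Sum>c\<le>M. w c * of_real (dz_coeff c N)" and C = "\<Sum>c\<le>M. norm (w c)" and \<alpha> = 1])
  show "norm (\<Sum>c\<le>M. w c * of_real (dz_coeff c n)) \<le> (\<Sum>c\<le>M. norm (w c)) * real n powr 1"
    if "n \<ge> 1" for n
    using norm_dz_coeff_lincomb_le [where w = w and M = M and N = n] by simp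
  have "\<exists>\<^sub>F \<sigma> in at_top. (\<Sum>c\<le>M. w c * Z c (of_real \<sigma>)) = 0"
    using assms(2) by (rule eventually_at_imp_frequently_at_top)
  then show "\<exists>\<^sub>F \<sigma> in at_top. (\<lambda>N. (\<Sum>c\<le>M. w c * of_real (dz_coeff c N)) * of_real (real N powr -\<sigma>)) sums 0"
    using dz_continuation_lincomb_sums [OF assms(1), where w = w]
    by (rule frequently_eventually_frequently [THEN frequently_elim1]) auto
qed (fact assms(3))

section \<open>Linear relations between the coefficients\<close>

(* The constant 0 ^ c removes the term j = 0, which power_sum_poly counts when c = 0. *)
definition dz_coeff_poly :: "nat \<Rightarrow> nat \<Rightarrow> real poly" where
  "dz_coeff_poly M c = monom 1 (M - c) * (power_sum_poly c - [:0 ^ c:])"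

lemma poly_dz_coeff_poly:
  assumes "N \<ge> 1" "c \<le> M"
  shows "poly (dz_coeff_poly M c) (real N) = real N ^ M * dz_coeff c N"
proof -
  have "{..<N} = insert 0 {1..<N}"
    using assms(1) by auto
  then have "(\<Sum>j<N. real j ^ c) = 0 ^ c + (\<Sum>j\<in>{1..<N}. real j ^ c)"
    by simp
  moreover have "real N ^ M = real N ^ (M - c) * real N ^ c"
    using assms(2) by (simp flip: power_add)
  ultimately show ?thesis
    using assms(1) by (simp add: dz_coeff_poly_def poly_monom poly_power_sum_poly dz_coeff_def)
qed

lemma coeff_dz_coeff_poly_1:
  assumes "M \<ge> 2" "c \<le> M"
  shows "coeff (dz_coeff_poly M c) 1 = (if c = M then bernoulli M else 0)"
proof (cases "c = M")
  case True
  then show ?thesis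
    using coeff_power_sum_poly_1 [of M] by (simp add: dz_coeff_poly_def)
next
  case False
  have "coeff (power_sum_poly c - [:0 ^ c:]) 0 = 0" if "M - c = 1"
    using that assms by (simp add: poly_0_coeff_0 [symmetric])
  with False assms(2) show ?thesis
    by (simp add: dz_coeff_poly_def coeff_monom_mult)
qed

theorem dz_coeff_lincomb_eq_0D:
  fixes w :: "nat \<Rightarrow> complex"
  assumes "M \<ge> 2" and vanish: "\<And>N. N \<ge> 1 \<Longrightarrow> (\<Sum>c\<le>M. w c * of_real (dz_coeff c N)) = 0"
  shows "w M * of_real (bernoulli M) = 0"
proof -
  define H where "H = (\<Sum>c\<le>M. smult (w c) (map_poly of_real (dz_coeff_poly M c)))"
  have "poly H (of_nat N) = of_nat N ^ M * (\<Sum>c\<le>M. w c * of_real (dz_coeff c N))" if "N \<ge> 1" for N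
  proof -
    have "poly H (of_real (real N)) = (\<Sum>c\<le>M. w c * of_real (poly (dz_coeff_poly M c) (real N)))"
      by (simp only: H_def poly_sum poly_smult poly_map_poly_of_real)
    also have "\<dots> = of_nat N ^ M * (\<Sum>c\<le>M. w c * of_real (dz_coeff c N))"
      unfolding sum_distrib_left by (intro sum.cong) (simp_all add: poly_dz_coeff_poly [OF that])
    finally show ?thesis
      by simp
  qed
  then have "H = 0"
    using vanish by (intro poly_eq_0_if_nat_roots) simp
  then have "coeff H 1 = 0"
    by simp
  moreover have "coeff H 1 = (\<Sum>c\<le>M. w c * of_real (coeff (dz_coeff_poly M c) 1))"
    by (simp add: H_def coeff_sum coeff_map_poly)
  also have "\<dots> = (\<Sum>c\<le>M. if c = M then w M * of_real (bernoulli M) else 0)"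
    using coeff_dz_coeff_poly_1 [OF assms(1)] by (intro sum.cong) auto
  also have "\<dots> = w M * of_real (bernoulli M)"
    by simp
  ultimately show ?thesis
    by simp
qed

theorem corollary5p1:
  fixes m :: nat and Z :: "nat \<Rightarrow> complex \<Rightarrow> complex"
  assumes "m > 0"
    and "\<And>c. c \<le> 2 * m \<Longrightarrow> is_dz_continuation c (Z c)"
  shows "\<not> (\<exists>cs :: nat \<Rightarrow> complex. \<forall>z. \<forall>\<^sub>F s in at z.
            Z (2 * m) s + (\<Sum>k = 1..2 * m - 1. cs k * Z k s) + cs 0 * Z 0 s / 2 = 0)"
proof
  assume "\<exists>cs :: nat \<Rightarrow> complex. \<forall>z. \<forall>\<^sub>F s in at z.
            Z (2 * m) s + (\<Sum>k = 1..2 * m - 1. cs k * Z k s) + cs 0 * Z 0 s / 2 = 0"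
  then obtain cs :: "nat \<Rightarrow> complex" where vanish: "\<And>z. \<forall>\<^sub>F s in at z.
            Z (2 * m) s + (\<Sum>k = 1..2 * m - 1. cs k * Z k s) + cs 0 * Z 0 s / 2 = 0"
    by blast
  define M where "M = 2 * m"
  define w where "w c = (if c = M then 1 else if c = 0 then cs 0 / 2 else cs c)" for c
  have M: "M \<ge> 2"
    using assms(1) by (simp add: M_def)
  have "(\<Sum>c = 1..M - 1. w c * Z c s) = (\<Sum>k = 1..M - 1. cs k * Z k s)" for s
    by (intro sum.cong) (auto simp: w_def)
  then have lincomb: "(\<Sum>c\<le>M. w c * Z c s) =
                      Z (2 * m) s + (\<Sum>k = 1..2 * m - 1. cs k * Z k s) + cs 0 * Z 0 s / 2" for s
    using M by (simp add: sum_atMost_split_first_last w_def M_def)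
  have vanish_lincomb: "\<forall>\<^sub>F s in at z. (\<Sum>c\<le>M. w c * Z c s) = 0" for z
    using vanish [of z] by (simp only: lincomb)
  have "(\<Sum>c\<le>M. w c * of_real (dz_coeff c N)) = 0" if "N \<ge> 1" for N
    by (rule dz_coeff_lincomb_eq_0_if_vanishing [OF _ vanish_lincomb that]) (use assms(2) in \<open>simp add: M_def\<close>)
  then have "bernoulli M = 0"
    using dz_coeff_lincomb_eq_0D [OF M, of w] by (simp add: w_def)
  then show False
    using bernoulli_even_nonzero [of m] assms(1) by (simp add: M_def)
qed

end
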